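(* Let \(\mathcal{I}\) be an instance of 3-SAT and let \(G(\mathcal{I})\), \(T(\mathcal{I})\) be as constructed below. If \(\mathcal{I}\) has a satisfying assignment, then \(T(\mathcal{I})\) is the \(\mathcal{F}\)-tree of some MCS ordering of \(G(\mathcal{I})\), and therefore also the \(\mathcal{F}\)-tree of some MNS ordering of \(G(\mathcal{I})\).
   Context: Let \(\mathcal{I}\) have variables \(x_1,\dots,x_k\) and clauses \(C_1,\dots,C_l\), each a disjunction of three literals. \(G(\mathcal{I})\) has vertices: literal vertices \(X=\{x_1,\dots,x_k,\overline{x_1},\dots,\overline{x_k}\}\), clause vertices \(c_1,\dots,c_l\), and six vertices \(r,p,q,a,b,t\). Edges: any two vertices of \(X\) are adjacent except the pairs \(x_j\overline{x_j}\); the clause vertices are pairwise nonadjacent; \(c_i\) is adjacent to every vertex of \(X\) except the three literal vertices of the literals of \(C_i\); each of \(r,p,q,a\) is adjacent to all literal vertices and all clause vertices; \(b\) is adjacent to all literal vertices; additionally the edges \(ab,ap,aq,bq,br,bt,pr,qr,qt\); no other edges. \(T(\mathcal{I})\) is the spanning tree consisting of all edges of \(G(\mathcal{I})\) incident to \(r\) together with the edges \(pa\) and \(bt\). With \(n\) the number of vertices: an MCS ordering is produced by repeatedly choosing an unnumbered vertex with the largest number of numbered neighbors; an MNS ordering uses set labels (all \(\emptyset\), start vertex gets \(\{n+1\}\); repeatedly pick an unnumbered vertex with inclusion-maximal label as \(v_j\) and add \(j\) to the labels of its unnumbered neighbors); ties are arbitrary. The \(\mathcal{F}\)-tree of an ordering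 \((v_1,\dots,v_n)\) has, for each \(v\ne v_1\), an edge from \(v\) to its leftmost neighbor in the ordering. *)

theory Defs
  imports Main
begin

definition is_ordering :: "'a set \<Rightarrow> 'a list \<Rightarrow> bool" where
  "is_ordering V vs \<longleftrightarrow> distinct vs \<and> set vs = V"

text \<open>MCS: at step j (0-based), the numbered vertices are those in take j vs; the
  chosen vertex vs!j has a maximum number of numbered neighbours among the
  unnumbered vertices (set (drop j vs)).\<close>

definition mcs_ordering :: "'a set \<Rightarrow> ('a \<Rightarrow> 'a \<Rightarrow> bool) \<Rightarrow> 'a list \<Rightarrow> bool" where
  "mcs_ordering V E vs \<longleftrightarrow> is_ordering V vs \<and>
     (\<forall>j < length vs. \<forall>u \<in> set (drop j vs).
        card {w \<in> set (take j vs). E u w} \<le> card {w \<in> set (take j vs). E (vs ! j) w})"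

text \<open>MNS labels: vs!i is the vertex v_(i+1) receiving number i+1.  Before the
  choice of v_(j+1) (0-based step j) the label of v is {n+1} if v is the start
  vertex, together with the numbers of its already numbered neighbours.\<close>

definition mns_label :: "('a \<Rightarrow> 'a \<Rightarrow> bool) \<Rightarrow> 'a list \<Rightarrow> nat \<Rightarrow> 'a \<Rightarrow> nat set" where
  "mns_label E vs j v =
     (if v = hd vs then {length vs + 1} else {}) \<union> {Suc i | i. i < j \<and> E (vs ! i) v}"

definition mns_ordering :: "'a set \<Rightarrow> ('a \<Rightarrow> 'a \<Rightarrow> bool) \<Rightarrow> 'a list \<Rightarrow> bool" where
  "mns_ordering V E vs \<longleftrightarrow> is_ordering V vs \<and>
     (\<forall>j < length vs. \<forall>u \<in> set (drop j vs).
        \<not> (mns_label E vs j (vs ! j) \<subset> mns_label E vs j u))"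

text \<open>F-tree: for each v different from v_1 an edge from v to its leftmost
  neighbour in the ordering.  Edges are represented as doubleton sets.\<close>

definition F_tree :: "('a \<Rightarrow> 'a \<Rightarrow> bool) \<Rightarrow> 'a list \<Rightarrow> 'a set set" where
  "F_tree E vs = {{v, w} | v w. v \<in> set vs \<and> v \<noteq> hd vs \<and>
      (\<exists>i < length vs. vs ! i = w \<and> E v w \<and> (\<forall>i' < i. \<not> E v (vs ! i')))}"

text \<open>An instance: variables x_0..x_(k-1), clauses C_0..C_(l-1); clause i is the
  list cl i of its three literals; a literal (j, True) is x_j and (j, False)
  is the negation of x_j.\<close>

definition wf_instance :: "nat \<Rightarrow> nat \<Rightarrow> (nat \<Rightarrow> (nat \<times> bool) list) \<Rightarrow> bool" where
  "wf_instance k l cl \<longleftrightarrow> (\<forall>i < l. length (cl i) = 3 \<and> (\<forall>(j, s) \<in> set (cl i). j < k))"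

definition satisfiable :: "nat \<Rightarrow> nat \<Rightarrow> (nat \<Rightarrow> (nat \<times> bool) list) \<Rightarrow> bool" where
  "satisfiable k l cl \<longleftrightarrow> (\<exists>\<sigma> :: nat \<Rightarrow> bool. \<forall>i < l. \<exists>(j, s) \<in> set (cl i). \<sigma> j = s)"

datatype vert = Lit nat bool | Cl nat | R | P | Q | A | B | Tv

definition GV :: "nat \<Rightarrow> nat \<Rightarrow> vert set" where
  "GV k l = {Lit j s | j s. j < k} \<union> {Cl i | i. i < l} \<union> {R, P, Q, A, B, Tv}"

definition adj0 :: "(nat \<Rightarrow> (nat \<times> bool) list) \<Rightarrow> vert \<Rightarrow> vert \<Rightarrow> bool" where
  "adj0 cl u v \<longleftrightarrow>
     (\<exists>j s j' s'. u = Lit j s \<and> v = Lit j' s' \<and> j \<noteq> j')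
   \<or> (\<exists>i j s. u = Cl i \<and> v = Lit j s \<and> (j, s) \<notin> set (cl i))
   \<or> (u \<in> {R, P, Q, A} \<and> ((\<exists>j s. v = Lit j s) \<or> (\<exists>i. v = Cl i)))
   \<or> (u = B \<and> (\<exists>j s. v = Lit j s))
   \<or> (u, v) \<in> {(A, B), (A, P), (A, Q), (B, Q), (B, R), (B, Tv), (P, R), (Q, R), (Q, Tv)}"

definition GE :: "nat \<Rightarrow> nat \<Rightarrow> (nat \<Rightarrow> (nat \<times> bool) list) \<Rightarrow> vert \<Rightarrow> vert \<Rightarrow> bool" where
  "GE k l cl u v \<longleftrightarrow> u \<in> GV k l \<and> v \<in> GV k l \<and> (adj0 cl u v \<or> adj0 cl v u)"

definition TT :: "nat \<Rightarrow> nat \<Rightarrow> (nat \<Rightarrow> (nat \<times> bool) list) \<Rightarrow> vert set set" where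
  "TT k l cl = {{R, x} | x. GE k l cl R x} \<union> {{P, A}, {B, Tv}}"

end

theory Submission
  imports Defs
begin

text \<open>Start the search at r and take p next.  Then number, one variable at a time, the
  literal vertex made true by the satisfying assignment: it is adjacent to r, p and all
  literals numbered so far, so it is a legal MCS choice.  Afterwards every unnumbered vertex
  misses some numbered one (a clause vertex misses a true literal of its clause, a false
  literal misses its complement, a, b, q, t miss r or p), whereas a, b, q in this order are
  adjacent to all numbered vertices but one; so a, b, q are legal choices, and any
  completion of the search gives the F-tree T(I).  Every MCS ordering is an MNS ordering,
  because an MNS label is a set whose size is the MCS count.\<close>

section \<open>Maximum cardinality search\<close>

inductive mcs_prefix :: "'a set \<Rightarrow> ('a \<Rightarrow> 'a \<Rightarrow> bool) \<Rightarrow> 'a list \<Rightarrow> bool" for V E where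
  Nil: "mcs_prefix V E []"
| snoc: "mcs_prefix V E ps \<Longrightarrow> c \<in> V - set ps \<Longrightarrow>
    (\<And>u. u \<in> V - set ps \<Longrightarrow> card {w \<in> set ps. E u w} \<le> card {w \<in> set ps. E c w}) \<Longrightarrow>
    mcs_prefix V E (ps @ [c])"

lemma set_drop_eq_Diff_set_take:
  assumes "distinct xs"
  shows "set (drop j xs) = set xs - set (take j xs)"
proof -
  have "set xs = set (take j xs) \<union> set (drop j xs)"
    by (metis append_take_drop_id set_append)
  with set_take_disj_set_drop_if_distinct[OF assms order_refl] show ?thesis by blast
qed

lemma mcs_prefix_distinct_subset:
  "mcs_prefix V E vs \<Longrightarrow> distinct vs \<and> set vs \<subseteq> V"
  by (induction rule: mcs_prefix.induct) auto

lemma mcs_prefix_count_maximal: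
  assumes "mcs_prefix V E vs" "j < length vs" "u \<in> V - set (take j vs)"
  shows "card {w \<in> set (take j vs). E u w} \<le> card {w \<in> set (take j vs). E (vs ! j) w}"
  using assms
proof (induction rule: mcs_prefix.induct)
  case Nil
  then show ?case by simp
next
  case (snoc ps c)
  show ?case
  proof (cases "j < length ps")
    case True
    then show ?thesis using snoc by (simp add: nth_append)
  next
    case False
    with snoc.prems have "j = length ps" by simp
    then show ?thesis using snoc by simp
  qed
qed

lemma mcs_ordering_if_mcs_prefix:
  "mcs_prefix V E vs \<Longrightarrow> set vs = V \<Longrightarrow> mcs_ordering V E vs"
  using mcs_prefix_distinct_subset[of V E vs] mcs_prefix_count_maximal[of V E vs]
    set_drop_eq_Diff_set_take[of vs]
  unfolding mcs_ordering_def is_ordering_def by auto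

lemma mcs_prefix_extend:
  assumes "finite V" "mcs_prefix V E ps"
  shows "\<exists>rest. mcs_prefix V E (ps @ rest) \<and> set (ps @ rest) = V"
  using assms(2)
proof (induction "card (V - set ps)" arbitrary: ps rule: less_induct)
  case less
  show ?case
  proof (cases "V - set ps = {}")
    case True
    with less.prems mcs_prefix_distinct_subset[OF less.prems] show ?thesis
      by (intro exI[of _ "[]"]) auto
  next
    case False
    let ?count = "\<lambda>u. card {w \<in> set ps. E u w}"
    have finite: "finite (?count ` (V - set ps))" using assms(1) by simp
    then have "Max (?count ` (V - set ps)) \<in> ?count ` (V - set ps)"
      using False by (intro Max_in) auto
    then obtain c where max: "Max (?count ` (V - set ps)) = ?count c" and c: "c \<in> V - set ps"
      by (rule imageE)
    have "?count u \<le> ?count c" if "u \<in> V - set ps" for u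
      unfolding max[symmetric] using finite that by (rule Max_ge[OF _ imageI])
    with less.prems c have ext: "mcs_prefix V E (ps @ [c])"
      by (rule mcs_prefix.snoc)
    have "card (V - set (ps @ [c])) = card ((V - set ps) - {c})"
      by (rule arg_cong[where f = card]) auto
    also have "\<dots> < card (V - set ps)"
      using assms(1) c by (intro card_Diff1_less) auto
    finally have "card (V - set (ps @ [c])) < card (V - set ps)" .
    from less.hyps[OF this ext] obtain rest where
      "mcs_prefix V E ((ps @ [c]) @ rest)" "set ((ps @ [c]) @ rest) = V" by blast
    then show ?thesis by (intro exI[of _ "c # rest"]) simp
  qed
qed

lemma mcs_prefix_snoc_adjacent_all:
  assumes "mcs_prefix V E ps" "c \<in> V - set ps" "\<forall>w \<in> set ps. E c w"
  shows "mcs_prefix V E (ps @ [c])"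
proof (rule mcs_prefix.snoc[OF assms(1,2)])
  fix u
  have "{w \<in> set ps. E c w} = set ps" using assms(3) by auto
  then show "card {w \<in> set ps. E u w} \<le> card {w \<in> set ps. E c w}"
    by (simp add: card_mono)
qed

lemma mcs_prefix_snoc_adjacent_all_but_one:
  assumes "mcs_prefix V E ps" "c \<in> V - set ps" "z \<in> set ps" "\<forall>w \<in> set ps - {z}. E c w"
    and nondominating: "\<And>u. u \<in> V - set ps \<Longrightarrow> \<exists>w \<in> set ps. \<not> E u w"
  shows "mcs_prefix V E (ps @ [c])"
proof (rule mcs_prefix.snoc[OF assms(1,2)])
  fix u assume "u \<in> V - set ps"
  then obtain w where w: "w \<in> set ps" "\<not> E u w" using nondominating by blast
  have "card {w \<in> set ps. E u w} \<le> card (set ps - {w})"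
    using w by (intro card_mono) auto
  also have "\<dots> = card (set ps - {z})"
    using w assms(3) by simp
  also have "\<dots> \<le> card {w \<in> set ps. E c w}"
    using assms(4) by (intro card_mono) auto
  finally show "card {w \<in> set ps. E u w} \<le> card {w \<in> set ps. E c w}" .
qed

section \<open>Maximal neighbourhood search\<close>

lemma card_mns_label:
  assumes "symp E" "distinct vs" "j \<le> length vs" "v \<noteq> hd vs"
  shows "card (mns_label E vs j v) = card {w \<in> set (take j vs). E v w}"
proof -
  let ?I = "{i. i < j \<and> E v (vs ! i)}"
  have "{i. i < j \<and> E (vs ! i) v} = ?I"
    by (rule Collect_cong) (use sympD[OF assms(1)] in blast)
  then have "mns_label E vs j v = Suc ` ?I"
    using assms(4) by (auto simp: mns_label_def)
  then have "card (mns_label E vs j v) = card ?I"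
    by (simp add: card_image)
  also have "\<dots> = card ((!) vs ` ?I)"
    using assms(2,3) by (intro card_image[symmetric] inj_on_nth) auto
  also have "(!) vs ` ?I = {w \<in> set (take j vs). E v w}"
    using assms(3) by (auto simp: in_set_conv_nth nth_take)
  finally show ?thesis .
qed

lemma finite_mns_label: "finite (mns_label E vs j v)"
  by (rule finite_subset[of _ "insert (Suc (length vs)) (Suc ` {..<j})"])
    (auto simp: mns_label_def)

lemma mns_ordering_if_mcs_ordering:
  assumes "symp E" "mcs_ordering V E vs"
  shows "mns_ordering V E vs"
  unfolding mns_ordering_def
proof (intro conjI allI impI ballI)
  show "is_ordering V vs" using assms(2) by (simp add: mcs_ordering_def)
  then have distinct: "distinct vs" by (simp add: is_ordering_def)
  fix j u assume j: "j < length vs" and u: "u \<in> set (drop j vs)"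
  show "\<not> mns_label E vs j (vs ! j) \<subset> mns_label E vs j u"
  proof (cases "j = 0")
    case True
    then have "vs ! j = hd vs" using j by (cases vs) auto
    then show ?thesis using True by (auto simp: mns_label_def)
  next
    case False
    have hd: "hd vs = vs ! 0" using j by (cases vs) auto
    have "0 < length (take j vs)" using False j by simp
    then have "take j vs ! 0 \<in> set (take j vs)" by (rule nth_mem)
    then have "hd vs \<in> set (take j vs)" using False by (simp add: hd)
    then have "u \<noteq> hd vs"
      using u set_drop_eq_Diff_set_take[OF distinct] by auto
    moreover have "vs ! j \<noteq> hd vs"
      unfolding hd using False j distinct by (subst nth_eq_iff_index_eq) auto
    ultimately have "card (mns_label E vs j u) \<le> card (mns_label E vs j (vs ! j))"
      using assms j u card_mns_label[OF assms(1) distinct, of j]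
      unfolding mcs_ordering_def by simp
    then show ?thesis
      using psubset_card_mono[OF finite_mns_label[of E vs j u]] by (meson not_le)
  qed
qed

lemma F_tree_eq_parent_edges:
  assumes "\<And>v. v \<in> set vs \<Longrightarrow> v \<noteq> hd vs \<Longrightarrow>
     \<exists>i < length vs. vs ! i = f v \<and> E v (f v) \<and> (\<forall>i' < i. \<not> E v (vs ! i'))"
  shows "F_tree E vs = {{v, f v} | v. v \<in> set vs \<and> v \<noteq> hd vs}"
proof -
  have parent: "w = f v" if v: "v \<in> set vs" "v \<noteq> hd vs" and w: "i < length vs" "vs ! i = w" "E v w"
    "\<forall>i' < i. \<not> E v (vs ! i')" for v w i
  proof -
    obtain i0 where i0: "i0 < length vs" "vs ! i0 = f v" "E v (f v)" "\<forall>i' < i0. \<not> E v (vs ! i')"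
      using assms v by blast
    with w have "i = i0" by (metis linorder_neqE_nat)
    with w i0 show ?thesis by simp
  qed
  show ?thesis
    unfolding F_tree_def
  proof (intro set_eqI iffI)
    fix e assume "e \<in> {{v, w} | v w. v \<in> set vs \<and> v \<noteq> hd vs \<and>
      (\<exists>i < length vs. vs ! i = w \<and> E v w \<and> (\<forall>i' < i. \<not> E v (vs ! i')))}"
    then obtain v w i where v: "e = {v, w}" "v \<in> set vs" "v \<noteq> hd vs"
      and w: "i < length vs" "vs ! i = w" "E v w" "\<forall>i' < i. \<not> E v (vs ! i')" by blast
    then have "e = {v, f v}" using parent[OF v(2,3) w] by simp
    with v show "e \<in> {{v, f v} | v. v \<in> set vs \<and> v \<noteq> hd vs}" by blast
  next
    fix e assume "e \<in> {{v, f v} | v. v \<in> set vs \<and> v \<noteq> hd vs}"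
    then obtain v where e: "e = {v, f v}" "v \<in> set vs" "v \<noteq> hd vs" by blast
    from assms[OF e(2,3)] show "e \<in> {{v, w} | v w. v \<in> set vs \<and> v \<noteq> hd vs \<and>
      (\<exists>i < length vs. vs ! i = w \<and> E v w \<and> (\<forall>i' < i. \<not> E v (vs ! i')))}"
      using e by blast
  qed
qed

section \<open>The graph G(I) and the tree T(I)\<close>

lemma GV_simps[simp]: "Lit j s \<in> GV k l \<longleftrightarrow> j < k" "Cl i \<in> GV k l \<longleftrightarrow> i < l"
  "R \<in> GV k l" "P \<in> GV k l" "Q \<in> GV k l" "A \<in> GV k l" "B \<in> GV k l" "Tv \<in> GV k l"
  by (auto simp: GV_def)

lemma GV_finite: "finite (GV k l)"
proof -
  have "GV k l = (\<lambda>(j, s). Lit j s) ` ({..<k} \<times> UNIV) \<union> Cl ` {..<l} \<union> {R, P, Q, A, B, Tv}"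
    by (auto simp: GV_def)
  then show ?thesis by simp
qed

lemma GE_simps[simp]:
  "GE k l cl (Lit j s) (Lit j2 s2) \<longleftrightarrow> j < k \<and> j2 < k \<and> j \<noteq> j2"
  "GE k l cl (Cl i) (Lit j s) \<longleftrightarrow> i < l \<and> j < k \<and> (j, s) \<notin> set (cl i)"
  "GE k l cl (Lit j s) (Cl i) \<longleftrightarrow> i < l \<and> j < k \<and> (j, s) \<notin> set (cl i)"
  "\<not> GE k l cl (Cl i) (Cl i2)"
  "GE k l cl R (Lit j s) \<longleftrightarrow> j < k"
  "GE k l cl (Lit j s) R \<longleftrightarrow> j < k"
  "GE k l cl R (Cl i) \<longleftrightarrow> i < l"
  "GE k l cl (Cl i) R \<longleftrightarrow> i < l"
  "\<not> GE k l cl R R"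
  "GE k l cl R P"
  "GE k l cl R Q"
  "\<not> GE k l cl R A"
  "GE k l cl R B"
  "\<not> GE k l cl R Tv"
  "GE k l cl P (Lit j s) \<longleftrightarrow> j < k"
  "GE k l cl (Lit j s) P \<longleftrightarrow> j < k"
  "GE k l cl P (Cl i) \<longleftrightarrow> i < l"
  "GE k l cl (Cl i) P \<longleftrightarrow> i < l"
  "GE k l cl P R"
  "\<not> GE k l cl P P"
  "\<not> GE k l cl P Q"
  "GE k l cl P A"
  "\<not> GE k l cl P B"
  "\<not> GE k l cl P Tv"
  "GE k l cl Q (Lit j s) \<longleftrightarrow> j < k"
  "GE k l cl (Lit j s) Q \<longleftrightarrow> j < k"
  "GE k l cl Q (Cl i) \<longleftrightarrow> i < l"
  "GE k l cl (Cl i) Q \<longleftrightarrow> i < l"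
  "GE k l cl Q R"
  "\<not> GE k l cl Q P"
  "\<not> GE k l cl Q Q"
  "GE k l cl Q A"
  "GE k l cl Q B"
  "GE k l cl Q Tv"
  "GE k l cl A (Lit j s) \<longleftrightarrow> j < k"
  "GE k l cl (Lit j s) A \<longleftrightarrow> j < k"
  "GE k l cl A (Cl i) \<longleftrightarrow> i < l"
  "GE k l cl (Cl i) A \<longleftrightarrow> i < l"
  "\<not> GE k l cl A R"
  "GE k l cl A P"
  "GE k l cl A Q"
  "\<not> GE k l cl A A"
  "GE k l cl A B"
  "\<not> GE k l cl A Tv"
  "GE k l cl B (Lit j s) \<longleftrightarrow> j < k"
  "GE k l cl (Lit j s) B \<longleftrightarrow> j < k"
  "\<not> GE k l cl B (Cl i)"
  "\<not> GE k l cl (Cl i) B"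
  "GE k l cl B R"
  "\<not> GE k l cl B P"
  "GE k l cl B Q"
  "GE k l cl B A"
  "\<not> GE k l cl B B"
  "GE k l cl B Tv"
  "\<not> GE k l cl Tv (Lit j s)"
  "\<not> GE k l cl (Lit j s) Tv"
  "\<not> GE k l cl Tv (Cl i)"
  "\<not> GE k l cl (Cl i) Tv"
  "\<not> GE k l cl Tv R"
  "\<not> GE k l cl Tv P"
  "GE k l cl Tv Q"
  "\<not> GE k l cl Tv A"
  "GE k l cl Tv B"
  "\<not> GE k l cl Tv Tv"
  by (simp_all add: GE_def adj0_def) blast+

lemma symp_GE: "symp (GE k l cl)"
  unfolding GE_def by (rule sympI) blast

lemma GE_R_iff: "GE k l cl R v \<longleftrightarrow> v \<in> GV k l \<and> v \<notin> {R, A, Tv}"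
  by (cases v) auto

lemma GE_Tv_iff: "GE k l cl Tv w \<longleftrightarrow> w \<in> {Q, B}"
  by (cases w) auto

definition T_parent :: "vert \<Rightarrow> vert" where
  "T_parent v = (if v = A then P else if v = Tv then B else R)"

lemma TT_eq_parent_edges: "TT k l cl = {{v, T_parent v} | v. v \<in> GV k l \<and> v \<noteq> R}"
  unfolding TT_def T_parent_def GE_R_iff by (auto simp: insert_commute)

text \<open>Every vertex other than a and t is adjacent to r, a is adjacent to p but not to r,
  and t is adjacent only to b and q: only the positions of r, p, b, q matter.\<close>

lemma F_tree_eq_TT:
  assumes "is_ordering (GV k l) vs" "vs = R # P # xs @ B # ys" "Q \<notin> set xs"
  shows "F_tree (GE k l cl) vs = TT k l cl"
proof -
  have distinct: "distinct vs" and set_vs: "set vs = GV k l"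
    using assms(1) by (simp_all add: is_ordering_def)
  have hd: "hd vs = R" using assms(2) by simp
  have "\<exists>i < length vs. vs ! i = T_parent v \<and> GE k l cl v (T_parent v)
      \<and> (\<forall>i' < i. \<not> GE k l cl v (vs ! i'))" if v: "v \<in> set vs" "v \<noteq> hd vs" for v
  proof -
    consider "v = A" | "v = Tv" | "v \<notin> {R, A, Tv}" using v hd by auto
    then show ?thesis
    proof cases
      case 1
      have "vs ! 0 = R" "vs ! 1 = P" "1 < length vs" using assms(2) by simp_all
      then show ?thesis using 1 by (intro exI[of _ 1]) (auto simp: T_parent_def less_Suc_eq)
    next
      case 2
      have "B \<notin> set xs" using distinct assms(2) by simp
      have prefix: "take (length xs + 2) vs = R # P # xs" using assms(2) by simp
      have "vs ! i' \<in> set (R # P # xs)" if "i' < length xs + 2" for i'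
      proof -
        have "vs ! i' = take (length xs + 2) vs ! i'" using that by simp
        also have "\<dots> \<in> set (take (length xs + 2) vs)" using that assms(2) by (intro nth_mem) simp
        finally show ?thesis unfolding prefix .
      qed
      then have "\<forall>i' < length xs + 2. \<not> GE k l cl Tv (vs ! i')"
        using \<open>B \<notin> set xs\<close> assms(3)
        by (fastforce simp: GE_Tv_iff)
      then show ?thesis using 2 assms(2)
        by (intro exI[of _ "length xs + 2"]) (auto simp: T_parent_def nth_append)
    next
      case 3
      then have "GE k l cl R v" using v set_vs by (simp add: GE_R_iff)
      then have "GE k l cl v R" by (rule sympD[OF symp_GE])
      then show ?thesis using 3 assms(2) by (intro exI[of _ 0]) (auto simp: T_parent_def)
    qed
  qed
  then have "F_tree (GE k l cl) vs = {{v, T_parent v} | v. v \<in> set vs \<and> v \<noteq> hd vs}"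
    by (rule F_tree_eq_parent_edges)
  then show ?thesis
    using set_vs hd by (simp add: TT_eq_parent_edges)
qed

definition satisfies :: "(nat \<Rightarrow> bool) \<Rightarrow> nat \<Rightarrow> (nat \<Rightarrow> (nat \<times> bool) list) \<Rightarrow> bool" where
  "satisfies \<sigma> l cl \<longleftrightarrow> (\<forall>i < l. \<exists>(j, s) \<in> set (cl i). \<sigma> j = s)"

definition true_literals :: "(nat \<Rightarrow> bool) \<Rightarrow> nat \<Rightarrow> vert list" where
  "true_literals \<sigma> m = map (\<lambda>j. Lit j (\<sigma> j)) [0..<m]"

lemma set_true_literals: "set (true_literals \<sigma> m) = {Lit j (\<sigma> j) | j. j < m}"
  by (auto simp: true_literals_def)

lemma mcs_prefix_true_literals:
  "m \<le> k \<Longrightarrow> mcs_prefix (GV k l) (GE k l cl) (R # P # true_literals \<sigma> m)"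
proof (induction m)
  case 0
  have "mcs_prefix (GV k l) (GE k l cl) ([] @ [R])"
    by (rule mcs_prefix_snoc_adjacent_all[OF mcs_prefix.Nil]) auto
  then have "mcs_prefix (GV k l) (GE k l cl) (([] @ [R]) @ [P])"
    by (rule mcs_prefix_snoc_adjacent_all) auto
  then show ?case by (simp add: true_literals_def)
next
  case (Suc m)
  then have "mcs_prefix (GV k l) (GE k l cl) ((R # P # true_literals \<sigma> m) @ [Lit m (\<sigma> m)])"
    by (intro mcs_prefix_snoc_adjacent_all) (auto simp: set_true_literals)
  then show ?case by (simp add: true_literals_def)
qed

lemma exists_numbered_nonneighbour:
  assumes "wf_instance k l cl" "satisfies \<sigma> l cl"
    and "set (R # P # true_literals \<sigma> k) \<subseteq> set ps" "u \<in> GV k l - set ps"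
  shows "\<exists>w \<in> set ps. \<not> GE k l cl u w"
proof -
  have "\<exists>w \<in> set (R # P # true_literals \<sigma> k). \<not> GE k l cl u w"
  proof (cases u)
    case (Lit j s)
    then have "j < k" "s \<noteq> \<sigma> j" using assms(3,4) by (auto simp: set_true_literals)
    then show ?thesis using Lit by (intro bexI[of _ "Lit j (\<sigma> j)"]) (auto simp: set_true_literals)
  next
    case (Cl i)
    then have "i < l" using assms(4) by simp
    then obtain j where "(j, \<sigma> j) \<in> set (cl i)"
      using assms(2) unfolding satisfies_def by fastforce
    moreover have "j < k"
      using calculation \<open>i < l\<close> assms(1) unfolding wf_instance_def by fastforce
    ultimately show ?thesis
      using Cl by (intro bexI[of _ "Lit j (\<sigma> j)"]) (auto simp: set_true_literals)
  qed (use assms(3,4) in auto)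
  then show ?thesis using assms(3) by blast
qed

lemma mcs_prefix_search_start:
  assumes "wf_instance k l cl" "satisfies \<sigma> l cl"
  shows "mcs_prefix (GV k l) (GE k l cl) (R # P # true_literals \<sigma> k @ [A, B, Q])"
proof -
  let ?V = "GV k l" and ?E = "GE k l cl" and ?L = "R # P # true_literals \<sigma> k"
  have step: "mcs_prefix ?V ?E (ps @ [c])"
    if "mcs_prefix ?V ?E ps" "set ?L \<subseteq> set ps" "c \<in> ?V - set ps" "z \<in> set ps"
      "\<forall>w \<in> set ps - {z}. ?E c w" for ps c z
    using that by (intro mcs_prefix_snoc_adjacent_all_but_one exists_numbered_nonneighbour[OF assms])
  have "mcs_prefix ?V ?E (?L @ [A])"
    by (rule step[where z = R, OF mcs_prefix_true_literals]) (auto simp: set_true_literals)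
  then have "mcs_prefix ?V ?E ((?L @ [A]) @ [B])"
    by (rule step[where z = P]) (auto simp: set_true_literals)
  then have "mcs_prefix ?V ?E (((?L @ [A]) @ [B]) @ [Q])"
    by (rule step[where z = P]) (auto simp: set_true_literals)
  then show ?thesis by simp
qed

theorem lemma11:
  fixes k l :: nat and cl :: "nat \<Rightarrow> (nat \<times> bool) list"
  assumes "wf_instance k l cl"
    and "satisfiable k l cl"
  shows "(\<exists>vs. mcs_ordering (GV k l) (GE k l cl) vs \<and> F_tree (GE k l cl) vs = TT k l cl)
       \<and> (\<exists>vs. mns_ordering (GV k l) (GE k l cl) vs \<and> F_tree (GE k l cl) vs = TT k l cl)"
proof -
  obtain \<sigma> where "satisfies \<sigma> l cl"
    using assms(2) unfolding satisfiable_def satisfies_def by blast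
  then obtain rest where search: "mcs_prefix (GV k l) (GE k l cl)
      (R # P # true_literals \<sigma> k @ [A, B, Q] @ rest)"
    and complete: "set (R # P # true_literals \<sigma> k @ [A, B, Q] @ rest) = GV k l"
    using mcs_prefix_extend[OF GV_finite mcs_prefix_search_start[OF assms(1)]] by auto
  define vs where "vs = R # P # (true_literals \<sigma> k @ [A]) @ B # Q # rest"
  have mcs: "mcs_ordering (GV k l) (GE k l cl) vs"
    using mcs_ordering_if_mcs_prefix[OF search complete] by (simp add: vs_def)
  have "F_tree (GE k l cl) vs = TT k l cl"
    using mcs unfolding mcs_ordering_def
    by (intro F_tree_eq_TT[where xs = "true_literals \<sigma> k @ [A]" and ys = "Q # rest"])
      (auto simp: vs_def set_true_literals)
  then show ?thesis
    using mcs mns_ordering_if_mcs_ordering[OF symp_GE mcs] by blast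
qed

end
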